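(* Let $E$ be a finite extension of $\mathbb{Q}_\ell$ with ring of integers $\mathcal{O}_E$, let $A=E\langle T_1,\ldots,T_b\rangle$ be the Tate algebra and $M=(T_1,\ldots,T_b)\subset A$. Let $\alpha_1,\ldots,\alpha_b\in\mathcal{O}_E$ and let $\sigma$ be the continuous $E$-algebra endomorphism of $A$ with $\sigma(T_j)=\alpha_jT_j$ for all $j$. Assume that $\underline{\alpha}^n:=\alpha_1^{n_1}\cdots\alpha_b^{n_b}\neq 1$ for all $n=(n_1,\ldots,n_b)\in\mathbb{N}^b\setminus\{0\}$. Let $I\subset A$ be an ideal with $\sigma(I)\subset I$ which is not contained in $M$. Then $I=A$.
   Context: The Tate algebra $E\langle T_1,\ldots,T_b\rangle$ is the ring of power series $\sum_{n\in\mathbb{N}^b}g^{(n)}\underline{T}^n$ with $g^{(n)}\in E$ and $|g^{(n)}|\to0$ as $|n|\to\infty$, where $|\cdot|$ is the $\ell$-adic absolute value. *)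

theory Defs
  imports "HOL-Computational_Algebra.Primes" "HOL-Algebra.Ideal" "HOL-Algebra.RingHom" Complex_Main
begin

definition nonarch_absval :: "('e::field \<Rightarrow> real) \<Rightarrow> bool" where
  "nonarch_absval av \<longleftrightarrow>
     (\<forall>x. 0 \<le> av x) \<and> (\<forall>x. av x = 0 \<longleftrightarrow> x = 0) \<and>
     (\<forall>x y. av (x * y) = av x * av y) \<and>
     (\<forall>x y. av (x + y) \<le> max (av x) (av y))"

definition absval_complete :: "('e::field \<Rightarrow> real) \<Rightarrow> bool" where
  "absval_complete av \<longleftrightarrow>
     (\<forall>x :: nat \<Rightarrow> 'e.
        (\<forall>\<epsilon>>0. \<exists>N. \<forall>m\<ge>N. \<forall>n\<ge>N. av (x m - x n) < \<epsilon>) \<longrightarrow>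
        (\<exists>L. \<forall>\<epsilon>>0. \<exists>N. \<forall>n\<ge>N. av (x n - L) < \<epsilon>))"

text \<open>A finite extension of Q_l, equipped with the (unique) extension of the l-adic
  absolute value, characterised intrinsically: a field with a complete, discretely
  valued non-archimedean absolute value with finite residue field, normalised by |l| = 1/l.\<close>
definition l_adic_local_field :: "nat \<Rightarrow> ('e::field \<Rightarrow> real) \<Rightarrow> bool" where
  "l_adic_local_field l av \<longleftrightarrow>
     prime l \<and> nonarch_absval av \<and> av (of_nat l) = 1 / real l \<and>
     absval_complete av \<and>
     (\<exists>\<pi>. 0 < av \<pi> \<and> av \<pi> < 1 \<and> (\<forall>x. x \<noteq> 0 \<longrightarrow> (\<exists>k::int. av x = av \<pi> powi k))) \<and>
     finite ({x. av x \<le> 1} // {(x, y). av (x - y) < 1})"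

text \<open>Multi-indices in N^b are functions nat \<Rightarrow> nat vanishing from b on.\<close>
definition multiidx :: "nat \<Rightarrow> (nat \<Rightarrow> nat) set" where
  "multiidx b = {n. \<forall>j\<ge>b. n j = 0}"

definition tate :: "('e::field \<Rightarrow> real) \<Rightarrow> nat \<Rightarrow> ((nat \<Rightarrow> nat) \<Rightarrow> 'e) set" where
  "tate av b = {g. (\<forall>n. n \<notin> multiidx b \<longrightarrow> g n = 0) \<and>
                   (\<forall>\<epsilon>>0. finite {n \<in> multiidx b. av (g n) \<ge> \<epsilon>})}"

definition tmult :: "nat \<Rightarrow> ((nat \<Rightarrow> nat) \<Rightarrow> 'e::field) \<Rightarrow> ((nat \<Rightarrow> nat) \<Rightarrow> 'e) \<Rightarrow> (nat \<Rightarrow> nat) \<Rightarrow> 'e" where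
  "tmult b f g n = (\<Sum>m \<in> {m \<in> multiidx b. \<forall>j. m j \<le> n j}. f m * g (\<lambda>j. n j - m j))"

definition tone :: "(nat \<Rightarrow> nat) \<Rightarrow> 'e::field" where
  "tone = (\<lambda>n. if n = (\<lambda>_. 0) then 1 else 0)"

definition tate_ring :: "('e::field \<Rightarrow> real) \<Rightarrow> nat \<Rightarrow> ((nat \<Rightarrow> nat) \<Rightarrow> 'e) ring" where
  "tate_ring av b = \<lparr>carrier = tate av b, mult = tmult b, one = tone,
                     zero = (\<lambda>_. 0), add = (\<lambda>f g n. f n + g n)\<rparr>"

definition Tvar :: "nat \<Rightarrow> (nat \<Rightarrow> nat) \<Rightarrow> 'e::field" where
  "Tvar j = (\<lambda>n. if n = (\<lambda>i. if i = j then 1 else 0) then 1 else 0)"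

definition gauss_norm :: "('e::field \<Rightarrow> real) \<Rightarrow> ((nat \<Rightarrow> nat) \<Rightarrow> 'e) \<Rightarrow> real" where
  "gauss_norm av g = (SUP n. av (g n))"

definition cont_E_alg_endo :: "('e::field \<Rightarrow> real) \<Rightarrow> nat \<Rightarrow> (((nat \<Rightarrow> nat) \<Rightarrow> 'e) \<Rightarrow> ((nat \<Rightarrow> nat) \<Rightarrow> 'e)) \<Rightarrow> bool" where
  "cont_E_alg_endo av b \<sigma> \<longleftrightarrow>
     \<sigma> \<in> ring_hom (tate_ring av b) (tate_ring av b) \<and>
     (\<forall>c. \<forall>g \<in> tate av b. \<sigma> (\<lambda>n. c * g n) = (\<lambda>n. c * \<sigma> g n)) \<and>
     (\<forall>g \<in> tate av b. \<forall>\<epsilon>>0. \<exists>\<delta>>0. \<forall>h \<in> tate av b.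
        gauss_norm av (\<lambda>n. h n - g n) < \<delta> \<longrightarrow> gauss_norm av (\<lambda>n. \<sigma> h n - \<sigma> g n) < \<epsilon>)"

end

theory Submission
  imports Defs "HOL-Computational_Algebra.Polynomial"
begin

text \<open>
  Since \<open>\<sigma>\<close> is continuous and multiplies the monomial \<open>T\<^sup>n\<close> by \<open>\<alpha>\<^sup>n\<close>, it acts
  diagonally on coefficients: \<open>\<sigma>(g)\<^sub>n = \<alpha>\<^sup>n g\<^sub>n\<close>. Hence a \<open>\<sigma>\<close>-stable ideal is
  stable under \<open>g \<mapsto> (Q(\<alpha>\<^sup>n) g\<^sub>n)\<^sub>n\<close> for every polynomial \<open>Q\<close>. An element of \<open>I\<close>
  outside \<open>M\<close> has a nonzero constant term, which we normalise to 1. Only finitely many of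
  its coefficients have absolute value \<open>\<ge> 1\<close>, and at those \<open>n\<close> we have \<open>\<alpha>\<^sup>n \<noteq> 1\<close>,
  so a polynomial \<open>Q\<close> with \<open>Q(1) = 1\<close>, \<open>|Q| \<le> 1\<close> on the unit disc and \<open>|Q|\<close> small at
  these finitely many \<open>\<alpha>\<^sup>n\<close> produces \<open>u \<in> I\<close> with \<open>u\<^sub>0 = 1\<close> and \<open>|u\<^sub>n| < 1\<close> for
  \<open>n \<noteq> 0\<close>. Such a \<open>u\<close> is a unit of the Tate algebra, so \<open>I = A\<close>.
\<close>

section \<open>Non-archimedean absolute values\<close>

locale nonarch_valued_field =
  fixes av :: "'e::field \<Rightarrow> real"
  assumes nonarch: "nonarch_absval av"
begin

lemma av_nonneg [simp]: "0 \<le> av x"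
  and av_eq_0_iff [simp]: "av x = 0 \<longleftrightarrow> x = 0"
  and av_mult [simp]: "av (x * y) = av x * av y"
  and av_add_le: "av (x + y) \<le> max (av x) (av y)"
  using nonarch unfolding nonarch_absval_def by auto

lemma av_pos_iff [simp]: "0 < av x \<longleftrightarrow> x \<noteq> 0"
  using av_nonneg[of x] av_eq_0_iff[of x] by linarith

lemma av_0 [simp]: "av 0 = 0"
  by simp

lemma av_1 [simp]: "av 1 = 1"
proof -
  have "av 1 = av 1 * av 1"
    using av_mult[of 1 1] by (simp only: mult_1)
  then show ?thesis
    using av_eq_0_iff[of 1] by (simp only: mult_cancel_left1) simp
qed

lemma av_minus [simp]: "av (- x) = av x"
proof -
  have "av (- 1) * av (- 1) = 1"
    using av_mult[of "- 1" "- 1"] by simp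
  then have "av (- 1) = 1"
    by (metis av_nonneg abs_of_nonneg abs_square_eq_1 power2_eq_square)
  then show ?thesis
    using av_mult[of "- 1" x] by simp
qed

lemma av_power [simp]: "av (x ^ k) = av x ^ k"
  by (induction k) simp_all

lemma av_prod [simp]: "av (prod f A) = (\<Prod>a\<in>A. av (f a))"
  by (induction A rule: infinite_finite_induct) simp_all

lemma av_inverse [simp]: "av (inverse x) = inverse (av x)"
proof (cases "x = 0")
  case False
  then have "av x * av (inverse x) = 1"
    using av_mult[of x "inverse x"] by simp
  then show ?thesis
    by (simp add: inverse_unique)
qed simp

lemma av_divide [simp]: "av (x / y) = av x / av y"
  by (simp add: divide_inverse)

lemma av_diff_le: "av (x - y) \<le> max (av x) (av y)"
  using av_add_le[of x "- y"] by simp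

lemma av_minus_commute: "av (x - y) = av (y - x)"
  using av_minus[of "x - y"] by simp

lemma av_sum_le:
  assumes "0 \<le> K" "\<And>a. a \<in> A \<Longrightarrow> av (f a) \<le> K"
  shows "av (sum f A) \<le> K"
  using assms(2)
proof (induction A rule: infinite_finite_induct)
  case (insert x F)
  then have "av (f x) \<le> K" "av (sum f F) \<le> K"
    by auto
  with insert show ?case
    using order_trans[OF av_add_le[of "f x" "sum f F"]] by simp
qed (use assms(1) in simp_all)

lemma av_add_eq_left:
  assumes "av w < av z"
  shows "av (z + w) = av z"
proof -
  have "av z \<le> max (av (z + w)) (av w)"
    using av_add_le[of "z + w" "- w"] by simp
  then have "av z \<le> av (z + w)"
    using assms by (auto simp: le_max_iff_disj)
  moreover have "av (z + w) \<le> av z"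
    using av_add_le[of z w] assms by simp
  ultimately show ?thesis
    by simp
qed

lemma av_1_minus: "av w < 1 \<Longrightarrow> av (1 - w) = 1"
  using av_add_eq_left[of "- w" 1] by simp

lemma av_power_minus_1_lt:
  assumes "av (w - 1) < 1"
  shows "av (w ^ m - 1) < 1"
proof (induction m)
  case (Suc m)
  have "av w = 1"
    using av_add_eq_left[of "w - 1" 1] assms by simp
  then have "av (w ^ m * (w - 1)) < 1"
    using assms by simp
  then have "av (w ^ m * (w - 1) + (w ^ m - 1)) < 1"
    using av_add_le[of "w ^ m * (w - 1)" "w ^ m - 1"] Suc by simp
  moreover have "w ^ m * (w - 1) + (w ^ m - 1) = w ^ Suc m - 1"
    by (simp add: algebra_simps)
  ultimately show ?case
    by simp
qed simp

lemma av_le_generator: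
  assumes "0 < av \<pi>" "av \<pi> < 1"
    and value_group: "\<forall>x. x \<noteq> 0 \<longrightarrow> (\<exists>k::int. av x = av \<pi> powi k)"
    and "av x < 1"
  shows "av x \<le> av \<pi>"
proof (cases "x = 0")
  case False
  then obtain k :: int where k: "av x = av \<pi> powi k"
    using value_group by blast
  have "\<not> k \<le> 0"
  proof
    assume "k \<le> 0"
    then have "av \<pi> powi 0 \<le> av \<pi> powi k"
      using assms(1,2) by (intro power_int_decreasing) auto
    then show False
      using k \<open>av x < 1\<close> by simp
  qed
  then have "av \<pi> powi k \<le> av \<pi> powi 1"
    using assms(1,2) by (intro power_int_decreasing) auto
  then show ?thesis
    using k by simp
qed (use assms(1) in simp)

definition residue_field :: "'e set set" where
  "residue_field = {x. av x \<le> 1} // {(x, y). av (x - y) < 1}"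

lemma residue_class_power_repeats:
  assumes fin: "finite residue_field" and "av z = 1"
  shows "\<exists>d. 1 \<le> d \<and> d \<le> card residue_field \<and> av (z ^ d - 1) < 1"
proof -
  let ?Q = residue_field
  define cls where "cls i = {(x, y). av (x - y) < 1} `` {z ^ i}" for i
  have "cls i \<in> ?Q" for i
    unfolding residue_field_def cls_def by (rule quotientI) (simp add: \<open>av z = 1\<close>)
  then have "card (cls ` {0..card ?Q}) \<le> card ?Q"
    by (intro card_mono[OF fin]) blast
  then have "\<not> inj_on cls {0..card ?Q}"
    by (intro pigeonhole) simp
  then obtain i k where ik: "i \<le> card ?Q" "k \<le> card ?Q" "i \<noteq> k" "cls i = cls k"
    unfolding inj_on_def by auto
  have repeat: "av (z ^ (k - i) - 1) < 1" if "i < k" "cls i = cls k" for i k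
  proof -
    have "z ^ k \<in> cls k"
      unfolding cls_def by simp
    then have "z ^ k \<in> cls i"
      using that(2) by simp
    then have "av (z ^ i - z ^ k) < 1"
      unfolding cls_def by simp
    moreover have "z ^ i - z ^ k = - (z ^ i * (z ^ (k - i) - 1))"
      using that(1) by (simp add: algebra_simps flip: power_add)
    ultimately show ?thesis
      using \<open>av z = 1\<close> by simp
  qed
  show ?thesis
  proof (cases "i < k")
    case True
    then show ?thesis
      using repeat[OF True ik(4)] ik by (intro exI[of _ "k - i"]) auto
  next
    case False
    then have "k < i"
      using ik(3) by simp
    then show ?thesis
      using repeat[OF \<open>k < i\<close> ik(4)[symmetric]] ik by (intro exI[of _ "i - k"]) auto
  qed
qed

lemma residue_exponent_exists:
  assumes "finite residue_field"
  shows "\<exists>N\<ge>1. \<forall>z. av z = 1 \<longrightarrow> av (z ^ N - 1) < 1"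
proof (intro exI conjI allI impI)
  let ?Q = residue_field
  show "1 \<le> (fact (card ?Q) :: nat)"
    by simp
  fix z assume "av z = 1"
  then obtain d where d: "1 \<le> d" "d \<le> card ?Q" "av (z ^ d - 1) < 1"
    using residue_class_power_repeats[OF assms] by blast
  then obtain m where "fact (card ?Q) = d * m"
    by (metis dvd_def dvd_fact)
  then show "av (z ^ fact (card ?Q) - 1) < 1"
    using av_power_minus_1_lt[OF d(3), of m] by (simp add: power_mult)
qed

end

section \<open>Local fields and peak polynomials\<close>

locale local_valued_field = nonarch_valued_field av for av :: "'e::field \<Rightarrow> real" +
  fixes \<pi> :: 'e and N :: nat
  assumes uniformizer_pos: "0 < av \<pi>"
    and uniformizer_lt_1: "av \<pi> < 1"
    and av_le_uniformizer: "av x < 1 \<Longrightarrow> av x \<le> av \<pi>"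
    and residue_exponent_pos: "1 \<le> N"
    and av_unit_power_minus_1: "av z = 1 \<Longrightarrow> av (z ^ N - 1) < 1"
begin

definition contract :: "'e \<Rightarrow> 'e" where
  "contract y = (y ^ (N + 1) - y) / \<pi>"

lemma av_contract_lt_1:
  assumes "av y < 1"
  shows "av (contract y) = av y / av \<pi>"
proof -
  have "av (y ^ N) < 1"
    using assms residue_exponent_pos by (simp add: power_less_one_iff)
  then have "av (1 - y ^ N) = 1"
    by (rule av_1_minus)
  moreover have "y ^ (N + 1) - y = - (y * (1 - y ^ N))"
    by (simp add: algebra_simps)
  ultimately show ?thesis
    unfolding contract_def by simp
qed

lemma av_contract_le_1:
  assumes "av y \<le> 1"
  shows "av (contract y) \<le> 1"
proof (cases "av y < 1")
  case True
  then show ?thesis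
    using av_contract_lt_1 av_le_uniformizer uniformizer_pos by simp
next
  case False
  then have "av y = 1"
    using assms by simp
  moreover have "y ^ (N + 1) - y = y * (y ^ N - 1)"
    by (simp add: algebra_simps)
  ultimately have "av (y ^ (N + 1) - y) \<le> av \<pi>"
    using av_le_uniformizer av_unit_power_minus_1 by simp
  then show ?thesis
    unfolding contract_def using uniformizer_pos by simp
qed

lemma av_1_minus_power_le_1: "av z \<le> 1 \<Longrightarrow> av (1 - z ^ N) \<le> 1"
  using av_diff_le[of 1 "z ^ N"] by (simp add: power_le_one)

lemma av_1_minus_unit_power: "av z = 1 \<Longrightarrow> av (1 - z ^ N) \<le> av \<pi>"
  using av_le_uniformizer av_unit_power_minus_1 av_minus_commute[of 1 "z ^ N"] by simp

text \<open>\<open>peak_poly s\<close> is 1 at 0, bounded by 1 on the unit disc and by \<open>|\<pi>|\<close> where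
  \<open>|\<pi>|\<^sup>s < |y| \<le> 1\<close>: the factor \<open>1 - y\<^sup>N\<close> is small at units, while \<open>contract\<close> keeps
  the disc and multiplies the absolute value of non-units by \<open>1/|\<pi>|\<close>, so after at most \<open>s\<close>
  steps \<open>y\<close> has become a unit.\<close>

primrec peak_poly :: "nat \<Rightarrow> 'e poly" where
  "peak_poly 0 = 1"
| "peak_poly (Suc s) =
     (1 - monom 1 N) * pcompose (peak_poly s) (smult (inverse \<pi>) (monom 1 (N + 1) - monom 1 1))"

lemma poly_peak_poly_Suc [simp]:
  "poly (peak_poly (Suc s)) y = (1 - y ^ N) * poly (peak_poly s) (contract y)"
  by (simp add: contract_def poly_pcompose poly_monom divide_inverse mult.commute)

declare peak_poly.simps(2) [simp del]

lemma poly_peak_poly_0 [simp]: "poly (peak_poly s) 0 = 1"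
  using residue_exponent_pos by (induction s) (simp_all add: contract_def)

lemma av_peak_poly_le_1: "av y \<le> 1 \<Longrightarrow> av (poly (peak_poly s) y) \<le> 1"
proof (induction s arbitrary: y)
  case (Suc s)
  then show ?case
    using av_1_minus_power_le_1 av_contract_le_1 by (simp add: mult_le_one)
qed simp

lemma av_peak_poly_le_uniformizer:
  "av y \<le> 1 \<Longrightarrow> av \<pi> ^ s < av y \<Longrightarrow> av (poly (peak_poly s) y) \<le> av \<pi>"
proof (induction s arbitrary: y)
  case (Suc s)
  show ?case
  proof (cases "av y < 1")
    case True
    then have "av \<pi> ^ s < av (contract y)"
      using Suc.prems(2) uniformizer_pos by (simp add: av_contract_lt_1 field_simps)
    then have "av (poly (peak_poly s) (contract y)) \<le> av \<pi>"
      using Suc.IH av_contract_le_1 Suc.prems(1) by blast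
    then show ?thesis
      using av_1_minus_power_le_1[OF Suc.prems(1)] mult_mono[of _ 1 _ "av \<pi>"] by simp
  next
    case False
    then have "av (1 - y ^ N) \<le> av \<pi>"
      using Suc.prems(1) av_1_minus_unit_power by simp
    moreover have "av (poly (peak_poly s) (contract y)) \<le> 1"
      using Suc.prems(1) av_contract_le_1 av_peak_poly_le_1 by blast
    ultimately show ?thesis
      using mult_mono[of "av (1 - y ^ N)" "av \<pi>" _ 1] by simp
  qed
qed simp

lemma peak_poly_exists:
  assumes "finite Y" "\<And>y. y \<in> Y \<Longrightarrow> y \<noteq> 0" "0 < \<epsilon>"
  shows "\<exists>q. poly q 0 = 1 \<and> (\<forall>y. av y \<le> 1 \<longrightarrow> av (poly q y) \<le> 1) \<and>
             (\<forall>y\<in>Y. av y \<le> 1 \<longrightarrow> av (poly q y) < \<epsilon>)"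
proof -
  have "0 < Min (insert 1 (av ` Y))"
    using assms(1,2) by simp
  then obtain s where s: "av \<pi> ^ s < Min (insert 1 (av ` Y))"
    using real_arch_pow_inv uniformizer_lt_1 by blast
  obtain M where M: "av \<pi> ^ M < \<epsilon>"
    using real_arch_pow_inv[OF assms(3) uniformizer_lt_1] by blast
  show ?thesis
  proof (intro exI conjI allI impI ballI)
    fix y
    assume "y \<in> Y" "av y \<le> 1"
    then have "av \<pi> ^ s < av y"
      using s assms(1) by (meson Min_le finite_imageI finite_insert image_eqI insertCI order_less_le_trans)
    then have "av (poly (peak_poly s) y) ^ M \<le> av \<pi> ^ M"
      using av_peak_poly_le_uniformizer \<open>av y \<le> 1\<close> by (simp add: power_mono)
    then show "av (poly (peak_poly s ^ M) y) < \<epsilon>"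
      using M by simp
  qed (simp_all add: av_peak_poly_le_1 power_le_one)
qed

end

lemma l_adic_local_field_imp_local_valued_field:
  assumes "l_adic_local_field l av"
  shows "\<exists>\<pi> N. local_valued_field av \<pi> N"
proof -
  interpret nonarch_valued_field av
    using assms by unfold_locales (simp add: l_adic_local_field_def)
  obtain \<pi> where \<pi>: "0 < av \<pi>" "av \<pi> < 1"
    and value_group: "\<forall>x. x \<noteq> 0 \<longrightarrow> (\<exists>k::int. av x = av \<pi> powi k)"
    using assms unfolding l_adic_local_field_def by blast
  obtain N where "1 \<le> N" "\<forall>z. av z = 1 \<longrightarrow> av (z ^ N - 1) < 1"
    using residue_exponent_exists assms unfolding l_adic_local_field_def residue_field_def by blast
  then have "local_valued_field av \<pi> N"
    using \<pi> av_le_generator[OF \<pi> value_group] by unfold_locales auto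
  then show ?thesis
    by blast
qed

section \<open>Coefficients and monomials in the Tate algebra\<close>

lemma tate_ring_simps [simp]:
  "carrier (tate_ring av b) = tate av b"
  "mult (tate_ring av b) = tmult b"
  "one (tate_ring av b) = tone"
  "zero (tate_ring av b) = (\<lambda>_. 0)"
  "add (tate_ring av b) = (\<lambda>f g n. f n + g n)"
  by (simp_all add: tate_ring_def)

definition Tmonom :: "(nat \<Rightarrow> nat) \<Rightarrow> (nat \<Rightarrow> nat) \<Rightarrow> 'e::field" where
  "Tmonom m = (\<lambda>n. if n = m then 1 else 0)"

definition Tconst :: "'e::field \<Rightarrow> (nat \<Rightarrow> nat) \<Rightarrow> 'e" where
  "Tconst c = (\<lambda>n. c * Tmonom (\<lambda>_. 0) n)"

definition unit_index :: "nat \<Rightarrow> nat \<Rightarrow> nat" where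
  "unit_index j = (\<lambda>i. if i = j then 1 else 0)"

definition multipow :: "(nat \<Rightarrow> 'e::field) \<Rightarrow> nat \<Rightarrow> (nat \<Rightarrow> nat) \<Rightarrow> 'e" where
  "multipow \<alpha> b n = (\<Prod>j<b. \<alpha> j ^ n j)"

lemma zero_in_multiidx [simp]: "(\<lambda>_. 0) \<in> multiidx b"
  by (simp add: multiidx_def)

lemma unit_index_in_multiidx: "j < b \<Longrightarrow> unit_index j \<in> multiidx b"
  by (simp add: multiidx_def unit_index_def)

lemma Tmonom_0: "Tmonom (\<lambda>_. 0) = tone"
  by (simp add: Tmonom_def tone_def)

lemma Tvar_eq_Tmonom: "Tvar j = Tmonom (unit_index j)"
  by (simp add: Tvar_def Tmonom_def unit_index_def)

lemma finite_multiidx_le: "finite {m \<in> multiidx b. \<forall>j. m j \<le> n j}"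
proof (rule finite_subset)
  show "finite {f. \<forall>x. (x \<in> {..<b} \<longrightarrow> f x \<in> {..sum n {..<b}}) \<and> (x \<notin> {..<b} \<longrightarrow> f x = 0)}"
    by (intro finite_set_of_finite_funs) auto
  show "{m \<in> multiidx b. \<forall>j. m j \<le> n j} \<subseteq> \<dots>"
  proof (intro subsetI CollectI allI conjI impI)
    fix m x
    assume m: "m \<in> {m \<in> multiidx b. \<forall>j. m j \<le> n j}"
    show "m x \<in> {..sum n {..<b}}" if "x \<in> {..<b}"
      using m member_le_sum[OF that, of n] by (auto intro: order_trans)
    show "m x = 0" if "x \<notin> {..<b}"
      using m that by (simp add: multiidx_def)
  qed
qed

lemma tmult_Tmonom_left:
  assumes "m \<in> multiidx b"
  shows "tmult b (Tmonom m) g n = (if \<forall>i. m i \<le> n i then g (\<lambda>i. n i - m i) else 0)"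
  using assms finite_multiidx_le[of b n]
  by (simp add: tmult_def Tmonom_def if_distrib[of "\<lambda>x. x * _"] sum.delta' cong: if_cong)

lemma tmult_scale_left: "tmult b (\<lambda>n. c * f n) g = (\<lambda>n. c * tmult b f g n)"
  unfolding fun_eq_iff tmult_def by (simp add: sum_distrib_left mult.assoc)

lemma tmult_scale_right: "tmult b f (\<lambda>n. c * g n) = (\<lambda>n. c * tmult b f g n)"
  unfolding fun_eq_iff tmult_def by (simp add: sum_distrib_left mult.left_commute)

lemma tmult_Tconst_left: "tmult b (Tconst c) g = (\<lambda>n. c * g n)"
  by (simp add: Tconst_def tmult_scale_left tmult_Tmonom_left)

lemma tmult_Tmonom_Tmonom:
  assumes "m \<in> multiidx b"
  shows "tmult b (Tmonom m) (Tmonom n) = Tmonom (\<lambda>i. m i + n i)"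
proof
  fix k
  have iff: "(\<forall>i. m i \<le> k i) \<and> (\<lambda>i. k i - m i) = n \<longleftrightarrow> k = (\<lambda>i. m i + n i)"
    by (auto simp: fun_eq_iff) (metis le_add_diff_inverse)+
  have "tmult b (Tmonom m) (Tmonom n) k = (if \<forall>i. m i \<le> k i then Tmonom n (\<lambda>i. k i - m i) else 0)"
    by (rule tmult_Tmonom_left[OF assms])
  also have "\<dots> = Tmonom (\<lambda>i. m i + n i) k"
    using iff unfolding Tmonom_def by auto
  finally show "tmult b (Tmonom m) (Tmonom n) k = Tmonom (\<lambda>i. m i + n i) k" .
qed

lemma multipow_0 [simp]: "multipow \<alpha> b (\<lambda>_. 0) = 1"
  by (simp add: multipow_def)

lemma multipow_add: "multipow \<alpha> b (\<lambda>i. m i + n i) = multipow \<alpha> b m * multipow \<alpha> b n"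
  by (simp add: multipow_def power_add prod.distrib)

lemma multipow_unit_index:
  assumes "j < b"
  shows "multipow \<alpha> b (unit_index j) = \<alpha> j"
proof -
  have "multipow \<alpha> b (unit_index j) = (\<Prod>i<b. if i = j then \<alpha> i else 1)"
    unfolding multipow_def by (intro prod.cong) (auto simp: unit_index_def)
  then show ?thesis
    using assms by simp
qed

context nonarch_valued_field
begin

lemma av_multipow_le_1: "(\<And>j. j < b \<Longrightarrow> av (\<alpha> j) \<le> 1) \<Longrightarrow> av (multipow \<alpha> b n) \<le> 1"
  unfolding multipow_def by (auto intro!: prod_le_1 power_le_one)

lemma tate_finite_large_coeffs: "g \<in> tate av b \<Longrightarrow> 0 < \<epsilon> \<Longrightarrow> finite {n \<in> multiidx b. \<epsilon> \<le> av (g n)}"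
  by (simp add: tate_def)

lemma tate_finite_support:
  assumes "finite S" "S \<subseteq> multiidx b" "\<And>n. n \<notin> S \<Longrightarrow> g n = 0"
  shows "g \<in> tate av b"
  unfolding tate_def
proof (intro CollectI conjI allI impI)
  fix \<epsilon> :: real
  assume "\<epsilon> > 0"
  then have "{n \<in> multiidx b. \<epsilon> \<le> av (g n)} \<subseteq> S"
    using assms(3) by force
  then show "finite {n \<in> multiidx b. \<epsilon> \<le> av (g n)}"
    using assms(1) by (rule finite_subset)
qed (use assms in auto)

lemma Tmonom_in_tate: "m \<in> multiidx b \<Longrightarrow> Tmonom m \<in> tate av b"
  by (rule tate_finite_support[of "{m}"]) (auto simp: Tmonom_def)

lemma Tconst_in_tate: "Tconst c \<in> tate av b"
  by (rule tate_finite_support[of "{\<lambda>_. 0}"]) (auto simp: Tconst_def Tmonom_def)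

lemma tate_scale:
  assumes "g \<in> tate av b"
  shows "(\<lambda>n. c * g n) \<in> tate av b"
proof (cases "c = 0")
  case True
  then show ?thesis
    using tate_finite_support[of "{}" b "\<lambda>n. c * g n"] by simp
next
  case False
  show ?thesis
    unfolding tate_def
  proof (intro CollectI conjI allI impI)
    fix \<epsilon> :: real
    assume "0 < \<epsilon>"
    have "{n \<in> multiidx b. \<epsilon> \<le> av (c * g n)} = {n \<in> multiidx b. \<epsilon> / av c \<le> av (g n)}"
      using False by (auto simp: field_simps)
    then show "finite {n \<in> multiidx b. \<epsilon> \<le> av (c * g n)}"
      using assms False \<open>0 < \<epsilon>\<close> by (simp add: tate_def)
  qed (use assms in \<open>simp add: tate_def\<close>)
qed

lemma tate_bounded:
  assumes "g \<in> tate av b"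
  shows "\<exists>B\<ge>1. \<forall>n. av (g n) \<le> B"
proof -
  let ?S = "{n \<in> multiidx b. 1 \<le> av (g n)}"
  let ?B = "Max (insert 1 ((\<lambda>n. av (g n)) ` ?S))"
  have fin: "finite ?S"
    using assms unfolding tate_def by auto
  then have "1 \<le> ?B"
    by (intro Max_ge) auto
  moreover have "av (g n) \<le> ?B" for n
  proof (cases "n \<in> ?S")
    case True
    then show ?thesis
      using fin by (intro Max_ge) auto
  next
    case False
    then have "av (g n) < 1"
      using assms unfolding tate_def by (cases "n \<in> multiidx b") auto
    then show ?thesis
      using \<open>1 \<le> ?B\<close> by simp
  qed
  ultimately show ?thesis
    by blast
qed

lemma gauss_norm_le: "(\<And>n. av (g n) \<le> K) \<Longrightarrow> gauss_norm av g \<le> K"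
  unfolding gauss_norm_def by (rule cSUP_least) auto

lemma av_le_gauss_norm:
  assumes "\<And>n. av (g n) \<le> B"
  shows "av (g n) \<le> gauss_norm av g"
  unfolding gauss_norm_def using assms by (intro cSUP_upper bdd_aboveI2) auto

lemma av_diff_le_gauss_norm:
  assumes "f \<in> tate av b" "g \<in> tate av b"
  shows "av (f n - g n) \<le> gauss_norm av (\<lambda>n. f n - g n)"
proof -
  obtain B1 B2 where "\<And>n. av (f n) \<le> B1" "\<And>n. av (g n) \<le> B2"
    using tate_bounded[OF assms(1)] tate_bounded[OF assms(2)] by metis
  then show ?thesis
    using av_diff_le by (intro av_le_gauss_norm[of _ "max B1 B2"]) (meson max.mono order_trans)
qed

lemma tate_truncation:
  assumes "g \<in> tate av b" "0 < \<eta>"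
  obtains S h where "finite S" "S \<subseteq> multiidx b" "\<And>n. n \<notin> S \<Longrightarrow> h n = 0"
    and "\<And>n. av (h n - g n) < \<eta>"
proof
  let ?S = "{n \<in> multiidx b. \<eta> \<le> av (g n)}"
  show "finite ?S"
    using assms unfolding tate_def by blast
  show "av ((if n \<in> ?S then g n else 0) - g n) < \<eta>" for n
    using assms unfolding tate_def by (cases "n \<in> multiidx b") auto
qed auto

end

section \<open>Diagonal endomorphisms\<close>

locale tate_diagonal_endo = nonarch_valued_field av for av :: "'e::field \<Rightarrow> real" +
  fixes b :: nat and \<alpha> :: "nat \<Rightarrow> 'e" and \<sigma> :: "((nat \<Rightarrow> nat) \<Rightarrow> 'e) \<Rightarrow> (nat \<Rightarrow> nat) \<Rightarrow> 'e"
  assumes tate_ring: "ring (tate_ring av b)"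
    and sigma: "cont_E_alg_endo av b \<sigma>"
    and sigma_Tvar: "\<And>j. j < b \<Longrightarrow> \<sigma> (Tvar j) = (\<lambda>n. \<alpha> j * Tvar j n)"
    and alpha_integral: "\<And>j. j < b \<Longrightarrow> av (\<alpha> j) \<le> 1"
begin

lemma sigma_hom: "\<sigma> \<in> ring_hom (tate_ring av b) (tate_ring av b)"
  using sigma unfolding cont_E_alg_endo_def by simp

lemma sigma_scale: "g \<in> tate av b \<Longrightarrow> \<sigma> (\<lambda>n. c * g n) = (\<lambda>n. c * \<sigma> g n)"
  using sigma unfolding cont_E_alg_endo_def by simp

lemma sigma_in_tate: "g \<in> tate av b \<Longrightarrow> \<sigma> g \<in> tate av b"
  using ring_hom_closed[OF sigma_hom] by simp

lemma sigma_add: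
  "f \<in> tate av b \<Longrightarrow> g \<in> tate av b \<Longrightarrow> \<sigma> (\<lambda>n. f n + g n) = (\<lambda>n. \<sigma> f n + \<sigma> g n)"
  using ring_hom_add[OF sigma_hom, of f g] by simp

lemma sigma_tmult: "f \<in> tate av b \<Longrightarrow> g \<in> tate av b \<Longrightarrow> \<sigma> (tmult b f g) = tmult b (\<sigma> f) (\<sigma> g)"
  using ring_hom_mult[OF sigma_hom, of f g] by simp

lemma sigma_tone: "\<sigma> tone = tone"
  using ring_hom_one[OF sigma_hom] by simp

lemma sigma_zero: "\<sigma> (\<lambda>_. 0) = (\<lambda>_. 0)"
  using ring_hom_zero[OF sigma_hom tate_ring tate_ring] by simp

lemma sigma_Tmonom:
  assumes "n \<in> multiidx b"
  shows "\<sigma> (Tmonom n) = (\<lambda>k. multipow \<alpha> b n * Tmonom n k)"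
  using assms
proof (induction "\<Sum>i<b. n i" arbitrary: n)
  case 0
  then have "n = (\<lambda>_. 0)"
    by (auto simp: multiidx_def fun_eq_iff) (metis lessThan_iff not_le)
  then show ?case
    by (simp add: Tmonom_0 sigma_tone)
next
  case (Suc d)
  then obtain j where j: "j < b" "0 < n j"
    by (metis lessThan_iff neq0_conv sum.neutral nat.distinct(1))
  define n' where "n' = (\<lambda>i. n i - unit_index j i)"
  have n': "n' \<in> multiidx b"
    using Suc.prems unfolding n'_def multiidx_def by auto
  have n_eq: "n = (\<lambda>i. unit_index j i + n' i)"
    using j unfolding n'_def unit_index_def by (auto simp: fun_eq_iff)
  have "(\<Sum>i<b. n i) = (\<Sum>i<b. unit_index j i) + (\<Sum>i<b. n' i)"
    by (subst n_eq) (simp add: sum.distrib)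
  moreover have "(\<Sum>i<b. unit_index j i) = 1"
    using j unfolding unit_index_def by simp
  ultimately have "d = (\<Sum>i<b. n' i)"
    using Suc.hyps(2) by simp
  then have IH: "\<sigma> (Tmonom n') = (\<lambda>k. multipow \<alpha> b n' * Tmonom n' k)"
    using Suc.hyps(1) n' by blast
  have Tmonom_n: "tmult b (Tvar j) (Tmonom n') = (Tmonom n :: _ \<Rightarrow> 'e)"
    unfolding Tvar_eq_Tmonom n_eq by (rule tmult_Tmonom_Tmonom[OF unit_index_in_multiidx[OF j(1)]])
  have "\<sigma> (Tmonom n) = \<sigma> (tmult b (Tvar j) (Tmonom n'))"
    by (simp only: Tmonom_n)
  also have "\<dots> = tmult b (\<lambda>k. \<alpha> j * Tvar j k) (\<lambda>k. multipow \<alpha> b n' * Tmonom n' k)"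
    using j n' IH sigma_Tvar by (simp add: sigma_tmult Tvar_eq_Tmonom Tmonom_in_tate unit_index_in_multiidx)
  also have "\<dots> = (\<lambda>k. (\<alpha> j * multipow \<alpha> b n') * Tmonom n k)"
    using Tmonom_n by (simp add: tmult_scale_left tmult_scale_right mult.assoc)
  also have "\<alpha> j * multipow \<alpha> b n' = multipow \<alpha> b n"
    by (subst n_eq) (simp add: multipow_add multipow_unit_index j)
  finally show ?case .
qed

lemma sigma_finite_support:
  assumes "finite S" "S \<subseteq> multiidx b" "\<And>n. n \<notin> S \<Longrightarrow> g n = 0"
  shows "\<sigma> g = (\<lambda>k. multipow \<alpha> b k * g k)"
  using assms
proof (induction S arbitrary: g rule: finite_induct)
  case empty
  then have "g = (\<lambda>_. 0)"
    by auto
  then show ?case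
    by (simp add: sigma_zero)
next
  case (insert a S)
  define g' where "g' = g(a := 0)"
  have g'_support: "g' n = 0" if "n \<notin> S" for n
    using insert.prems(2) that unfolding g'_def by auto
  have g': "g' \<in> tate av b"
    using insert.hyps(1) insert.prems(1) g'_support by (intro tate_finite_support) auto
  have a: "a \<in> multiidx b"
    using insert.prems(1) by simp
  have "g = (\<lambda>n. g' n + g a * Tmonom a n)"
    unfolding g'_def Tmonom_def by auto
  then have "\<sigma> g = \<sigma> (\<lambda>n. g' n + g a * Tmonom a n)"
    by (rule arg_cong)
  also have "\<dots> = (\<lambda>n. \<sigma> g' n + \<sigma> (\<lambda>n. g a * Tmonom a n) n)"
    by (rule sigma_add[OF g' tate_scale[OF Tmonom_in_tate[OF a]]])
  also have "\<dots> = (\<lambda>n. multipow \<alpha> b n * g' n + g a * (multipow \<alpha> b a * Tmonom a n))"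
    using insert.IH[OF _ g'_support] insert.prems(1) a
    by (simp add: sigma_scale Tmonom_in_tate sigma_Tmonom)
  also have "\<dots> = (\<lambda>n. multipow \<alpha> b n * g n)"
    by (rule ext) (simp add: g'_def Tmonom_def)
  finally show ?case .
qed

lemma av_sigma_minus_diagonal_lt:
  assumes g: "g \<in> tate av b" and "0 < \<epsilon>"
  shows "av (\<sigma> g n - multipow \<alpha> b n * g n) < \<epsilon>"
proof -
  obtain \<delta> where "0 < \<delta>" and cont: "\<And>h. h \<in> tate av b \<Longrightarrow>
      gauss_norm av (\<lambda>n. h n - g n) < \<delta> \<Longrightarrow> gauss_norm av (\<lambda>n. \<sigma> h n - \<sigma> g n) < \<epsilon>"
    using sigma g \<open>0 < \<epsilon>\<close> unfolding cont_E_alg_endo_def by blast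
  define \<eta> where "\<eta> = min (\<delta> / 2) \<epsilon>"
  have "0 < \<eta>"
    using \<open>0 < \<delta>\<close> \<open>0 < \<epsilon>\<close> by (simp add: \<eta>_def)
  then obtain S h where S: "finite S" "S \<subseteq> multiidx b" "\<And>n. n \<notin> S \<Longrightarrow> h n = 0"
    and close: "\<And>n. av (h n - g n) < \<eta>"
    using tate_truncation[OF g] by metis
  have h: "h \<in> tate av b"
    using S by (rule tate_finite_support)
  have "gauss_norm av (\<lambda>n. h n - g n) < \<delta>"
    using gauss_norm_le[of "\<lambda>n. h n - g n" \<eta>] close \<open>0 < \<delta>\<close> by (simp add: \<eta>_def less_imp_le)
  then have "av (\<sigma> h n - \<sigma> g n) < \<epsilon>"
    using cont[OF h] av_diff_le_gauss_norm[OF sigma_in_tate[OF h] sigma_in_tate[OF g], of n]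
    by linarith
  moreover have "av (multipow \<alpha> b n) * av (h n - g n) \<le> av (h n - g n)"
    using av_multipow_le_1 alpha_integral by (intro mult_left_le_one_le) auto
  then have "av (multipow \<alpha> b n * (h n - g n)) < \<epsilon>"
    using close[of n] by (simp add: \<eta>_def)
  moreover have "\<sigma> g n - multipow \<alpha> b n * g n = multipow \<alpha> b n * (h n - g n) - (\<sigma> h n - \<sigma> g n)"
    by (simp add: sigma_finite_support[OF S] algebra_simps)
  ultimately show ?thesis
    using av_diff_le[of "multipow \<alpha> b n * (h n - g n)" "\<sigma> h n - \<sigma> g n"]
    by (metis le_less_trans max_less_iff_conj)
qed

lemma sigma_diagonal:
  assumes "g \<in> tate av b"
  shows "\<sigma> g = (\<lambda>k. multipow \<alpha> b k * g k)"
proof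
  fix n
  have "av (\<sigma> g n - multipow \<alpha> b n * g n) = 0"
    using av_sigma_minus_diagonal_lt[OF assms, of "av (\<sigma> g n - multipow \<alpha> b n * g n)" n]
    by fastforce
  then show "\<sigma> g n = multipow \<alpha> b n * g n"
    by simp
qed

end

section \<open>The ideal generated by the variables\<close>

text \<open>The \<open>j\<close>-th cofactor collects, divided by \<open>T\<^sub>j\<close>, the monomials whose first nonzero
  exponent sits at position \<open>j\<close>; so \<open>f = \<Sum>\<^sub>j T\<^sub>j \<cdot> tate_cofactor b j f\<close> if \<open>f\<^sub>0 = 0\<close>.\<close>

definition tate_cofactor :: "nat \<Rightarrow> nat \<Rightarrow> ((nat \<Rightarrow> nat) \<Rightarrow> 'e::field) \<Rightarrow> (nat \<Rightarrow> nat) \<Rightarrow> 'e" where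
  "tate_cofactor b j f =
     (\<lambda>k. if k \<in> multiidx b \<and> (\<forall>i<j. k i = 0) then f (\<lambda>i. k i + unit_index j i) else 0)"

lemma tmult_Tvar_tate_cofactor:
  assumes "j < b"
  shows "tmult b (Tvar j) (tate_cofactor b j f) n =
    (if 1 \<le> n j \<and> (\<lambda>i. n i - unit_index j i) \<in> multiidx b \<and> (\<forall>i<j. n i = 0) then f n else 0)"
proof -
  have "(\<forall>i. unit_index j i \<le> n i) \<longleftrightarrow> 1 \<le> n j"
    by (auto simp: unit_index_def)
  moreover have "1 \<le> n j \<Longrightarrow> (\<lambda>i. n i - unit_index j i + unit_index j i) = n"
    by (auto simp: unit_index_def)
  moreover have "1 \<le> n j \<Longrightarrow> (\<forall>i<j. n i - unit_index j i = 0) \<longleftrightarrow> (\<forall>i<j. n i = 0)"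
    by (auto simp: unit_index_def)
  ultimately show ?thesis
    using assms
    by (auto simp: Tvar_eq_Tmonom tmult_Tmonom_left unit_index_in_multiidx tate_cofactor_def)
qed

lemma sum_tmult_Tvar_tate_cofactor:
  assumes f: "\<And>n. n \<notin> multiidx b \<Longrightarrow> f n = 0" and f0: "f (\<lambda>_. 0) = 0"
  shows "(\<lambda>n. \<Sum>j<b. tmult b (Tvar j) (tate_cofactor b j f) n) = f"
proof
  fix n
  show "(\<Sum>j<b. tmult b (Tvar j) (tate_cofactor b j f) n) = f n"
  proof (cases "n \<in> multiidx b \<and> n \<noteq> (\<lambda>_. 0)")
    case False
    moreover have "(\<lambda>i. n i - unit_index j i) \<notin> multiidx b" if "n \<notin> multiidx b" "j < b" for j
      using that by (auto simp: multiidx_def unit_index_def)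
    ultimately show ?thesis
      using f f0 by (auto simp: tmult_Tvar_tate_cofactor)
  next
    case True
    define j0 where "j0 = (LEAST i. n i \<noteq> 0)"
    have "\<exists>i. n i \<noteq> 0"
      using True by auto
    then have j0: "n j0 \<noteq> 0" "\<And>i. i < j0 \<Longrightarrow> n i = 0"
      unfolding j0_def by (auto intro: LeastI_ex dest: not_less_Least)
    have "j0 < b"
      by (rule ccontr) (use True j0(1) in \<open>auto simp: multiidx_def\<close>)
    have "(1 \<le> n j \<and> (\<lambda>i. n i - unit_index j i) \<in> multiidx b \<and> (\<forall>i<j. n i = 0)) \<longleftrightarrow> j = j0" for j
    proof
      assume j: "1 \<le> n j \<and> (\<lambda>i. n i - unit_index j i) \<in> multiidx b \<and> (\<forall>i<j. n i = 0)"
      then have "\<not> j < j0"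
        using j0(2) by fastforce
      moreover have "\<not> j0 < j"
        using j j0(1) by auto
      ultimately show "j = j0"
        by simp
    qed (use True j0 in \<open>auto simp: multiidx_def\<close>)
    then have "(\<Sum>j<b. tmult b (Tvar j) (tate_cofactor b j f) n) = (\<Sum>j<b. if j = j0 then f n else 0)"
      by (intro sum.cong) (simp_all add: tmult_Tvar_tate_cofactor)
    also have "\<dots> = f n"
      using \<open>j0 < b\<close> by simp
    finally show ?thesis .
  qed
qed

context nonarch_valued_field
begin

lemma tate_cofactor_in_tate:
  assumes f: "f \<in> tate av b" and "j < b"
  shows "tate_cofactor b j f \<in> tate av b"
  unfolding tate_def
proof (intro CollectI conjI allI impI)
  fix \<epsilon> :: real
  assume "0 < \<epsilon>"
  have "{k \<in> multiidx b. \<epsilon> \<le> av (tate_cofactor b j f k)} \<subseteq>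
      (\<lambda>n i. n i - unit_index j i) ` {n \<in> multiidx b. \<epsilon> \<le> av (f n)}"
  proof
    fix k
    assume k: "k \<in> {k \<in> multiidx b. \<epsilon> \<le> av (tate_cofactor b j f k)}"
    then have "(\<lambda>i. k i + unit_index j i) \<in> {n \<in> multiidx b. \<epsilon> \<le> av (f n)}"
      using \<open>0 < \<epsilon>\<close> \<open>j < b\<close>
      by (auto simp: tate_cofactor_def multiidx_def unit_index_def split: if_splits)
    then show "k \<in> (\<lambda>n i. n i - unit_index j i) ` {n \<in> multiidx b. \<epsilon> \<le> av (f n)}"
      by (rule rev_image_eqI) simp
  qed
  then show "finite {k \<in> multiidx b. \<epsilon> \<le> av (tate_cofactor b j f k)}"
    using f \<open>0 < \<epsilon>\<close> unfolding tate_def by (auto elim: finite_subset)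
qed (simp add: tate_cofactor_def)

lemma in_Tvar_ideal_if_constant_term_0:
  assumes R: "ring (tate_ring av b)" and f: "f \<in> tate av b" and f0: "f (\<lambda>_. 0) = 0"
  shows "f \<in> genideal (tate_ring av b) {Tvar j | j. j < b}"
proof -
  let ?M = "genideal (tate_ring av b) {Tvar j | j. j < b}"
  have gens: "{Tvar j | j. j < b} \<subseteq> carrier (tate_ring av b)"
    by (auto simp: Tvar_eq_Tmonom Tmonom_in_tate unit_index_in_multiidx)
  interpret M: ideal ?M "tate_ring av b"
    by (rule ring.genideal_ideal[OF R gens])
  have partial_sums: "(\<lambda>n. \<Sum>j\<in>A. tmult b (Tvar j) (tate_cofactor b j f) n) \<in> ?M"
    if "A \<subseteq> {..<b}" for A
    using finite_subset[OF that finite_lessThan] that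
  proof (induction A rule: finite_induct)
    case empty
    then show ?case
      using additive_subgroup.zero_closed[OF M.additive_subgroup_axioms] by simp
  next
    case (insert a A)
    then have "Tvar a \<in> ?M"
      using ring.genideal_self[OF R gens] by auto
    then have "tmult b (Tvar a) (tate_cofactor b a f) \<in> ?M"
      using M.I_r_closed insert.prems tate_cofactor_in_tate[OF f] by simp
    then show ?case
      using additive_subgroup.a_closed[OF M.additive_subgroup_axioms] insert by simp
  qed
  have "(\<lambda>n. \<Sum>j<b. tmult b (Tvar j) (tate_cofactor b j f) n) \<in> ?M"
    by (rule partial_sums) simp
  moreover have "(\<lambda>n. \<Sum>j<b. tmult b (Tvar j) (tate_cofactor b j f) n) = f"
    using f f0 unfolding tate_def by (intro sum_tmult_Tvar_tate_cofactor) auto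
  ultimately show ?thesis
    by simp
qed

end

section \<open>Units of the Tate algebra\<close>

lemma degree_diff_less:
  assumes "m \<in> multiidx b" "\<forall>j. m j \<le> n j" "m \<noteq> (\<lambda>_. 0)"
  shows "(\<Sum>j<b. n j - m j) < (\<Sum>j<b. n j)"
proof -
  obtain j where "m j \<noteq> 0"
    using assms(3) by auto
  moreover from this have "j < b"
    by (rule contrapos_np) (use assms(1) in \<open>simp add: multiidx_def\<close>)
  moreover from calculation have "n j - m j < n j"
    using assms(2) by (metis diff_less le_neq_implies_less less_le_trans not_gr_zero)
  ultimately show ?thesis
    by (intro sum_strict_mono_ex1) auto
qed

function tate_inv :: "nat \<Rightarrow> ((nat \<Rightarrow> nat) \<Rightarrow> 'e::field) \<Rightarrow> (nat \<Rightarrow> nat) \<Rightarrow> 'e" where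
  "tate_inv b u n =
     (if n \<notin> multiidx b then 0 else if n = (\<lambda>_. 0) then 1 else
      - (\<Sum>m \<in> {m \<in> multiidx b. (\<forall>j. m j \<le> n j) \<and> m \<noteq> (\<lambda>_. 0)}. u m * tate_inv b u (\<lambda>j. n j - m j)))"
  by auto
termination
  by (relation "measure (\<lambda>(b, u, n). \<Sum>j<b. n j)") (auto intro: degree_diff_less)

declare tate_inv.simps [simp del]

lemma tate_inv_outside: "n \<notin> multiidx b \<Longrightarrow> tate_inv b u n = 0"
  by (simp add: tate_inv.simps)

lemma tmult_tate_inv:
  assumes "u (\<lambda>_. 0) = 1"
  shows "tmult b u (tate_inv b u) = tone"
proof
  fix n
  let ?A = "{m \<in> multiidx b. (\<forall>j. m j \<le> n j) \<and> m \<noteq> (\<lambda>_. 0)}"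
  show "tmult b u (tate_inv b u) n = tone n"
  proof (cases "n \<in> multiidx b")
    case False
    then have "(\<lambda>j. n j - m j) \<notin> multiidx b" if "m \<in> multiidx b" for m
      using that by (auto simp: multiidx_def)
    moreover have "n \<noteq> (\<lambda>_. 0)"
      using False by auto
    ultimately show ?thesis
      by (simp add: tmult_def tone_def tate_inv_outside)
  next
    case True
    have "{m \<in> multiidx b. \<forall>j. m j \<le> n j} = insert (\<lambda>_. 0) ?A"
      by auto
    moreover have "finite ?A"
      using finite_multiidx_le[of b n] by (rule finite_subset[rotated]) auto
    ultimately have "tmult b u (tate_inv b u) n =
        tate_inv b u n + (\<Sum>m\<in>?A. u m * tate_inv b u (\<lambda>j. n j - m j))"
      using assms by (simp add: tmult_def)
    also have "\<dots> = tone n"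
    proof (cases "n = (\<lambda>_. 0)")
      case True
      then have "?A = {}"
        by (auto simp: fun_eq_iff)
      then have "(\<Sum>m\<in>?A. u m * tate_inv b u (\<lambda>j. n j - m j)) = 0"
        by (simp only: sum.empty)
      moreover have "tate_inv b u n = 1"
        using True by (simp add: tate_inv.simps)
      ultimately show ?thesis
        using True by (simp only: tone_def if_True add_0_right) simp
    qed (use True in \<open>subst tate_inv.simps, simp add: tone_def\<close>)
    finally show ?thesis .
  qed
qed

primrec sums_of_fewer :: "(nat \<Rightarrow> nat) set \<Rightarrow> nat \<Rightarrow> (nat \<Rightarrow> nat) set" where
  "sums_of_fewer F 0 = {}"
| "sums_of_fewer F (Suc j) =
     insert (\<lambda>_. 0) ((\<lambda>(m, k) i. m i + k i) ` (F \<times> sums_of_fewer F j))"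

lemma finite_sums_of_fewer: "finite F \<Longrightarrow> finite (sums_of_fewer F j)"
  by (induction j) auto

context nonarch_valued_field
begin

lemma av_tate_inv_le_1:
  assumes "\<And>n. n \<noteq> (\<lambda>_. 0) \<Longrightarrow> av (u n) \<le> 1"
  shows "av (tate_inv b u n) \<le> 1"
proof (induction "\<Sum>j<b. n j" arbitrary: n rule: less_induct)
  case less
  let ?A = "{m \<in> multiidx b. (\<forall>j. m j \<le> n j) \<and> m \<noteq> (\<lambda>_. 0)}"
  have "av (\<Sum>m\<in>?A. u m * tate_inv b u (\<lambda>j. n j - m j)) \<le> 1"
    using less assms degree_diff_less by (intro av_sum_le) (auto intro: mult_le_one)
  then show ?case
    by (subst tate_inv.simps) simp
qed

text \<open>A term of the recursion for \<open>(u\<^sup>-\<^sup>1)\<^sub>n\<close> is a product of coefficients of \<open>u\<close>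
  whose indices sum to \<open>n\<close>. If \<open>n\<close> is not a sum of fewer than \<open>j\<close> indices where
  \<open>|u| \<ge> \<tau>\<close>, each such product has a factor below \<open>\<tau>\<close> or \<open>j\<close> factors bounded by \<open>\<rho>\<close>.\<close>

lemma av_tate_inv_le_max:
  assumes u: "\<And>n. n \<noteq> (\<lambda>_. 0) \<Longrightarrow> av (u n) \<le> \<rho>" and "\<rho> \<le> 1" "0 \<le> \<tau>"
    and "n \<notin> sums_of_fewer {m \<in> multiidx b. m \<noteq> (\<lambda>_. 0) \<and> \<tau> \<le> av (u m)} j"
  shows "av (tate_inv b u n) \<le> max \<tau> (\<rho> ^ j)"
  using assms(4)
proof (induction j arbitrary: n)
  case 0
  show ?case
    using av_tate_inv_le_1[of u b n] u \<open>\<rho> \<le> 1\<close> by (force simp: le_max_iff_disj)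
next
  case (Suc j)
  let ?F = "{m \<in> multiidx b. m \<noteq> (\<lambda>_. 0) \<and> \<tau> \<le> av (u m)}"
  let ?A = "{m \<in> multiidx b. (\<forall>j. m j \<le> n j) \<and> m \<noteq> (\<lambda>_. 0)}"
  have "0 \<le> \<rho>"
    using u[of "\<lambda>_. 1"] av_nonneg order_trans by (metis one_neq_zero)
  have "av (u m * tate_inv b u (\<lambda>i. n i - m i)) \<le> max \<tau> (\<rho> ^ Suc j)" if "m \<in> ?A" for m
  proof (cases "\<tau> \<le> av (u m)")
    case True
    have "n = (\<lambda>i. m i + (n i - m i))"
      using that by (auto simp: fun_eq_iff)
    moreover have "m \<in> ?F"
      using that True by simp
    ultimately have "(\<lambda>i. n i - m i) \<notin> sums_of_fewer ?F j"
      using Suc.prems by (auto intro: image_eqI[where x = "(m, \<lambda>i. n i - m i)"])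
    then have "av (tate_inv b u (\<lambda>i. n i - m i)) \<le> max \<tau> (\<rho> ^ j)"
      by (rule Suc.IH)
    moreover have "av (u m) \<le> \<rho>"
      using u that by blast
    ultimately have "av (u m * tate_inv b u (\<lambda>i. n i - m i)) \<le> \<rho> * max \<tau> (\<rho> ^ j)"
      using \<open>0 \<le> \<rho>\<close> by (simp add: mult_mono)
    also have "\<dots> \<le> max \<tau> (\<rho> ^ Suc j)"
      using \<open>0 \<le> \<rho>\<close> \<open>\<rho> \<le> 1\<close> \<open>0 \<le> \<tau>\<close> mult_left_le_one_le[of \<tau> \<rho>]
      by (auto simp: max_def mult_left_mono)
    finally show ?thesis .
  next
    case False
    moreover have "av (tate_inv b u (\<lambda>i. n i - m i)) \<le> 1"
      using u \<open>\<rho> \<le> 1\<close> by (intro av_tate_inv_le_1) (meson order_trans)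
    ultimately have "av (u m * tate_inv b u (\<lambda>i. n i - m i)) \<le> \<tau>"
      using mult_mono[of "av (u m)" \<tau> _ 1] \<open>0 \<le> \<tau>\<close> by simp
    then show ?thesis
      by simp
  qed
  then have "av (\<Sum>m\<in>?A. u m * tate_inv b u (\<lambda>i. n i - m i)) \<le> max \<tau> (\<rho> ^ Suc j)"
    using \<open>0 \<le> \<tau>\<close> by (intro av_sum_le) (auto simp: le_max_iff_disj)
  moreover have "n \<noteq> (\<lambda>_. 0)"
    using Suc.prems by auto
  ultimately show ?case
    using \<open>0 \<le> \<tau>\<close> by (subst tate_inv.simps) (auto simp: le_max_iff_disj)
qed

lemma tate_coeff_bound_lt_1:
  assumes "u \<in> tate av b" "\<And>n. n \<noteq> (\<lambda>_. 0) \<Longrightarrow> av (u n) < 1"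
  shows "\<exists>\<rho><1. \<forall>n. n \<noteq> (\<lambda>_. 0) \<longrightarrow> av (u n) \<le> \<rho>"
proof -
  let ?S = "{n \<in> multiidx b. n \<noteq> (\<lambda>_. 0) \<and> 1 / 2 \<le> av (u n)}"
  let ?\<rho> = "Max (insert (1 / 2) ((\<lambda>n. av (u n)) ` ?S))"
  have fin: "finite ?S"
    by (rule finite_subset[OF _ tate_finite_large_coeffs[OF assms(1), of "1 / 2"]]) auto
  have "av (u n) \<le> ?\<rho>" if "n \<noteq> (\<lambda>_. 0)" for n
  proof (cases "n \<in> ?S")
    case False
    then have "av (u n) \<le> 1 / 2"
      using assms(1) that unfolding tate_def by (cases "n \<in> multiidx b") auto
    then show ?thesis
      using fin by (meson Max_ge finite_imageI finite_insert insertI1 order_trans)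
  qed (use fin in auto)
  moreover have "?\<rho> < 1"
    using fin assms(2) by simp
  ultimately show ?thesis
    by blast
qed

lemma tate_inv_in_tate:
  assumes "u \<in> tate av b" "\<And>n. n \<noteq> (\<lambda>_. 0) \<Longrightarrow> av (u n) < 1"
  shows "tate_inv b u \<in> tate av b"
  unfolding tate_def
proof (intro CollectI conjI allI impI)
  fix \<epsilon> :: real
  assume "0 < \<epsilon>"
  obtain \<rho> where "\<rho> < 1" and \<rho>: "\<And>n. n \<noteq> (\<lambda>_. 0) \<Longrightarrow> av (u n) \<le> \<rho>"
    using tate_coeff_bound_lt_1[OF assms] by blast
  obtain j where j: "\<rho> ^ j < \<epsilon>"
    using real_arch_pow_inv[OF \<open>0 < \<epsilon>\<close> \<open>\<rho> < 1\<close>] by blast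
  let ?F = "{m \<in> multiidx b. m \<noteq> (\<lambda>_. 0) \<and> \<epsilon> / 2 \<le> av (u m)}"
  have "finite ?F"
    using \<open>0 < \<epsilon>\<close> by (intro finite_subset[OF _ tate_finite_large_coeffs[OF assms(1), of "\<epsilon> / 2"]]) auto
  have "av (tate_inv b u n) \<le> max (\<epsilon> / 2) (\<rho> ^ j)" if "n \<notin> sums_of_fewer ?F j" for n
    using \<rho> \<open>\<rho> < 1\<close> \<open>0 < \<epsilon>\<close> that by (intro av_tate_inv_le_max) auto
  then have "{n \<in> multiidx b. \<epsilon> \<le> av (tate_inv b u n)} \<subseteq> sums_of_fewer ?F j"
    using j \<open>0 < \<epsilon>\<close> by (force simp: max_def split: if_splits)
  then show "finite {n \<in> multiidx b. \<epsilon> \<le> av (tate_inv b u n)}"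
    using finite_sums_of_fewer[OF \<open>finite ?F\<close>] by (rule finite_subset)
qed (rule tate_inv_outside)

lemma ideal_eq_carrier_if_near_one:
  assumes "ideal I (tate_ring av b)" "u \<in> I" "u (\<lambda>_. 0) = 1"
    and "\<And>n. n \<noteq> (\<lambda>_. 0) \<Longrightarrow> av (u n) < 1"
  shows "I = carrier (tate_ring av b)"
proof -
  interpret ideal I "tate_ring av b"
    by (rule assms(1))
  have "u \<in> tate av b"
    using assms(2) a_subset by auto
  then have "tmult b u (tate_inv b u) \<in> I"
    using I_r_closed assms tate_inv_in_tate by simp
  then show ?thesis
    using tmult_tate_inv[where u = u, OF assms(3)] one_imp_carrier by simp
qed

end

section \<open>Stable ideals\<close>

locale sigma_stable_ideal =
  tate_diagonal_endo av b \<alpha> \<sigma> + local_valued_field av \<pi> N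
  for av :: "'e::field \<Rightarrow> real" and b \<alpha> \<sigma> \<pi> N +
  fixes I :: "((nat \<Rightarrow> nat) \<Rightarrow> 'e) set"
  assumes ideal: "ideal I (tate_ring av b)"
    and sigma_stable: "\<sigma> ` I \<subseteq> I"
    and nonresonant: "\<And>n. n \<in> multiidx b \<Longrightarrow> n \<noteq> (\<lambda>_. 0) \<Longrightarrow> multipow \<alpha> b n \<noteq> 1"
begin

interpretation I: ideal I "tate_ring av b"
  by (rule ideal)

lemma ideal_subset_tate: "I \<subseteq> tate av b"
  using I.a_subset by simp

lemma ideal_scale:
  assumes "g \<in> I"
  shows "(\<lambda>n. c * g n) \<in> I"
  using I.I_l_closed[of g "Tconst c"] Tconst_in_tate assms by (simp add: tmult_Tconst_left)

lemma ideal_poly_multipow: "g \<in> I \<Longrightarrow> (\<lambda>n. poly q (multipow \<alpha> b n) * g n) \<in> I"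
proof (induction q arbitrary: g)
  case (pCons a q)
  let ?h = "\<lambda>n. poly q (multipow \<alpha> b n) * g n"
  have h: "?h \<in> I"
    using pCons.IH[OF pCons.prems] .
  then have "\<sigma> ?h \<in> I"
    using sigma_stable by blast
  moreover have "\<sigma> ?h = (\<lambda>n. multipow \<alpha> b n * ?h n)"
    using h ideal_subset_tate by (intro sigma_diagonal) blast
  ultimately have "(\<lambda>n. multipow \<alpha> b n * (poly q (multipow \<alpha> b n) * g n)) \<in> I"
    by simp
  then have "(\<lambda>n. a * g n + multipow \<alpha> b n * (poly q (multipow \<alpha> b n) * g n)) \<in> I"
    using additive_subgroup.a_closed[OF I.additive_subgroup_axioms] ideal_scale[OF pCons.prems]
    by simp
  then show ?case
    by (simp add: algebra_simps)
qed (simp add: additive_subgroup.zero_closed[OF I.additive_subgroup_axioms, simplified])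

lemma damping_poly_exists:
  assumes g: "g \<in> tate av b"
  shows "\<exists>q. poly q 1 = 1 \<and> (\<forall>n. n \<noteq> (\<lambda>_. 0) \<longrightarrow> av (poly q (multipow \<alpha> b n) * g n) < 1)"
proof -
  obtain B where "1 \<le> B" and B: "\<And>n. av (g n) \<le> B"
    using tate_bounded[OF g] by blast
  define F where "F = {n \<in> multiidx b. n \<noteq> (\<lambda>_. 0) \<and> 1 \<le> av (g n)}"
  have "finite F"
    unfolding F_def using tate_finite_large_coeffs[OF g, of 1] by (auto elim: finite_subset[rotated])
  moreover have "y \<noteq> 0" if "y \<in> (\<lambda>n. multipow \<alpha> b n - 1) ` F" for y
    using nonresonant that by (auto simp: F_def)
  moreover have "0 < 1 / B"
    using \<open>1 \<le> B\<close> by simp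
  ultimately obtain q where q0: "poly q 0 = 1" and q_le: "\<And>y. av y \<le> 1 \<Longrightarrow> av (poly q y) \<le> 1"
    and q_small: "\<And>y. y \<in> (\<lambda>n. multipow \<alpha> b n - 1) ` F \<Longrightarrow> av y \<le> 1 \<Longrightarrow> av (poly q y) < 1 / B"
    using peak_poly_exists[of "(\<lambda>n. multipow \<alpha> b n - 1) ` F" "1 / B"] by blast
  have "av (poly q (multipow \<alpha> b n - 1) * g n) < 1" if n0: "n \<noteq> (\<lambda>_. 0)" for n
  proof -
    have y: "av (multipow \<alpha> b n - 1) \<le> 1"
      using av_diff_le[of "multipow \<alpha> b n" 1] av_multipow_le_1 alpha_integral by fastforce
    have "n \<in> F \<or> av (g n) < 1"
      using n0 g unfolding F_def tate_def by (cases "n \<in> multiidx b") auto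
    then show ?thesis
    proof (elim disjE)
      assume "n \<in> F"
      then have "av (poly q (multipow \<alpha> b n - 1)) * av (g n) < 1 / B * B"
        using q_small[OF imageI[OF \<open>n \<in> F\<close>] y] B by (intro mult_less_le_imp_less) (auto simp: F_def)
      then show ?thesis
        using \<open>1 \<le> B\<close> by simp
    next
      assume "av (g n) < 1"
      then show ?thesis
        using mult_left_le_one_le[OF av_nonneg av_nonneg q_le[OF y], of "g n"] by simp
    qed
  qed
  then show ?thesis
    using q0 by (intro exI[of _ "pcompose q [:-1, 1:]"]) (simp add: poly_pcompose)
qed

lemma near_one_element_exists:
  assumes "f \<in> I" "f (\<lambda>_. 0) \<noteq> 0"
  shows "\<exists>u\<in>I. u (\<lambda>_. 0) = 1 \<and> (\<forall>n. n \<noteq> (\<lambda>_. 0) \<longrightarrow> av (u n) < 1)"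
proof -
  define g where "g = (\<lambda>n. f n / f (\<lambda>_. 0))"
  have g: "g \<in> I"
    using ideal_scale[OF assms(1), of "inverse (f (\<lambda>_. 0))"] by (simp add: g_def field_simps)
  then obtain q where "poly q 1 = 1"
    and small: "\<And>n. n \<noteq> (\<lambda>_. 0) \<Longrightarrow> av (poly q (multipow \<alpha> b n) * g n) < 1"
    using damping_poly_exists ideal_subset_tate by blast
  moreover have "(\<lambda>n. poly q (multipow \<alpha> b n) * g n) \<in> I"
    using g by (rule ideal_poly_multipow)
  ultimately show ?thesis
    using assms(2) by (intro bexI[of _ "\<lambda>n. poly q (multipow \<alpha> b n) * g n"]) (simp_all add: g_def)
qed

end

theorem proposition2p1:
  fixes l :: nat and av :: "'e::field \<Rightarrow> real" and b :: nat
    and \<alpha> :: "nat \<Rightarrow> 'e" and \<sigma> :: "((nat \<Rightarrow> nat) \<Rightarrow> 'e) \<Rightarrow> ((nat \<Rightarrow> nat) \<Rightarrow> 'e)"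
    and I :: "((nat \<Rightarrow> nat) \<Rightarrow> 'e) set"
  assumes E: "l_adic_local_field l av"
    and alpha_int: "\<forall>j<b. av (\<alpha> j) \<le> 1"
    and sigma: "cont_E_alg_endo av b \<sigma>"
    and sigma_T: "\<forall>j<b. \<sigma> (Tvar j) = (\<lambda>n. \<alpha> j * Tvar j n)"
    and nonres: "\<forall>n \<in> multiidx b. n \<noteq> (\<lambda>_. 0) \<longrightarrow> (\<Prod>j<b. \<alpha> j ^ n j) \<noteq> 1"
    and I: "ideal I (tate_ring av b)"
    and stable: "\<sigma> ` I \<subseteq> I"
    and notM: "\<not> I \<subseteq> genideal (tate_ring av b) {Tvar j | j. j < b}"
  shows "I = carrier (tate_ring av b)"
proof -
  have nonarch: "nonarch_valued_field av"
    using E by unfold_locales (simp add: l_adic_local_field_def)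
  obtain \<pi> N where local: "local_valued_field av \<pi> N"
    using l_adic_local_field_imp_local_valued_field[OF E] by blast
  have R: "ring (tate_ring av b)"
    using I by (rule ideal.axioms(2))
  interpret sigma_stable_ideal av b \<alpha> \<sigma> \<pi> N I
    unfolding sigma_stable_ideal_def sigma_stable_ideal_axioms_def
      tate_diagonal_endo_def tate_diagonal_endo_axioms_def
    using nonarch local R sigma sigma_T alpha_int nonres I stable by (simp add: multipow_def)
  obtain f where "f \<in> I" "f \<notin> genideal (tate_ring av b) {Tvar j | j. j < b}"
    using notM by blast
  then have "f (\<lambda>_. 0) \<noteq> 0"
    using in_Tvar_ideal_if_constant_term_0[OF R] ideal_subset_tate by blast
  then obtain u where "u \<in> I" "u (\<lambda>_. 0) = 1" "\<And>n. n \<noteq> (\<lambda>_. 0) \<Longrightarrow> av (u n) < 1"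
    using near_one_element_exists \<open>f \<in> I\<close> by blast
  then show ?thesis
    by (rule ideal_eq_carrier_if_near_one[OF I])
qed

end
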